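(* Let $n>1$ and $1\le m\le n(n-1)$ be integers, and for each integer $i\ge1$ let $e_i=(\lceil \frac{i}{n-1}\rceil,\ n-((i-1)\bmod n))$. Then $e_m$ is distinct from each of $e_1,\dots,e_{m-1}$; that is, the arc added when constructing $\mathbb G(n,m)$ from $\mathbb G(n,m-1)$ is not already an arc of $\mathbb G(n,m-1)$.
   Context: $a\bmod b\in\{0,\dots,b-1\}$ denotes the remainder. The graphs $\mathbb G(n,m)$ on vertex set $\{1,\dots,n\}$ are built inductively: $\mathbb G(n,0)$ has no arcs, and for $1\le m\le n(n-1)$, $\mathbb G(n,m)$ is obtained from $\mathbb G(n,m-1)$ by adding the arc $e_m$ (from vertex $\lceil \frac{m}{n-1}\rceil$ to vertex $n-((m-1)\bmod n)$). *)

theory Defs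
  imports Complex_Main
begin

definition arc :: "nat \<Rightarrow> nat \<Rightarrow> nat \<times> nat" where
  "arc n i = (nat \<lceil>real i / real (n - 1)\<rceil>, n - ((i - 1) mod n))"

fun G_arcs :: "nat \<Rightarrow> nat \<Rightarrow> (nat \<times> nat) set" where
  "G_arcs n 0 = {}"
| "G_arcs n (Suc m) = insert (arc n (Suc m)) (G_arcs n m)"

end

theory Submission
  imports Defs
begin

text \<open>Two arcs with the same head have indices congruent modulo n, so the indices are at
  least n apart; since n > n - 1, the tails \<lceil>i/(n-1)\<rceil> of such arcs then differ.\<close>

lemma G_arcs_eq_image: "G_arcs n m = arc n ` {1..m}"
  by (induction m) (auto simp: atLeastAtMostSuc_conv)

lemma ceiling_less_ceiling_if_add_one_le:
  fixes x y :: real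
  assumes "x + 1 \<le> y"
  shows "\<lceil>x\<rceil> < \<lceil>y\<rceil>"
  using ceiling_mono[OF assms] by simp

lemma snd_arc_eq_imp_index_gap:
  assumes "0 < n" "1 \<le> i" "i < m" "snd (arc n m) = snd (arc n i)"
  shows "i + n \<le> m"
proof -
  have "(m - 1) mod n = (i - 1) mod n"
    using assms by (simp add: arc_def) (metis diff_diff_cancel less_imp_le mod_less_divisor)
  then have "n dvd (m - 1) - (i - 1)"
    using assms(3) by (simp add: mod_eq_dvd_iff_nat)
  then have "n \<le> (m - 1) - (i - 1)"
    using assms(2,3) by (simp add: dvd_imp_le)
  then show ?thesis
    using assms(2,3) by linarith
qed

lemma fst_arc_less_if_index_gap:
  assumes "1 < n" "i + (n - 1) \<le> m"
  shows "fst (arc n i) < fst (arc n m)"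
proof -
  have pos: "real (n - 1) > 0"
    using assms(1) by simp
  have "real i / real (n - 1) + 1 = real (i + (n - 1)) / real (n - 1)"
    using pos by (simp add: field_simps)
  also have "\<dots> \<le> real m / real (n - 1)"
    using assms(2) pos by (simp add: divide_right_mono)
  finally have "\<lceil>real i / real (n - 1)\<rceil> < \<lceil>real m / real (n - 1)\<rceil>"
    by (rule ceiling_less_ceiling_if_add_one_le)
  moreover have "0 \<le> \<lceil>real i / real (n - 1)\<rceil>"
    by (simp add: less_le_trans[of "-1" 0])
  ultimately show ?thesis
    unfolding arc_def fst_conv by (metis nat_less_eq_zless)
qed

lemma inj_on_arc:
  assumes "1 < n"
  shows "inj_on (arc n) {1..}"
proof -
  have "arc n m \<noteq> arc n i" if "1 \<le> i" "i < m" for i m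
  proof
    assume eq: "arc n m = arc n i"
    then have "i + n \<le> m"
      using snd_arc_eq_imp_index_gap[OF _ that] assms by simp
    then have "fst (arc n i) < fst (arc n m)"
      using assms by (intro fst_arc_less_if_index_gap) auto
    with eq show False
      by simp
  qed
  then show ?thesis
    by (intro inj_onI) (metis atLeast_iff linorder_neqE_nat)
qed

theorem lemma9:
  fixes n m :: nat
  assumes "n > 1" and "1 \<le> m" and "m \<le> n * (n - 1)"
  shows "(\<forall>i\<in>{1..<m}. arc n m \<noteq> arc n i) \<and> arc n m \<notin> G_arcs n (m - 1)"
proof -
  have inj: "inj_on (arc n) {1..}"
    using assms(1) by (rule inj_on_arc)
  have "arc n m \<noteq> arc n i" if "i \<in> {1..<m}" for i
    using inj_onD[OF inj, of m i] that assms(2) by auto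
  moreover have "arc n m \<notin> arc n ` {1..m - 1}"
    using inj_on_image_mem_iff[OF inj, of m "{1..m - 1}"] assms(2) by auto
  ultimately show ?thesis
    by (simp add: G_arcs_eq_image)
qed

end
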